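(* Let $\phi\in L^2(-1,0)$, let $D(z)=-iz+e^{-iz}+\int_{-1}^0e^{i\tau z}\phi(\tau)\,d\tau$ with zero set $\Lambda$, let $\vec e_\lambda=(1,e^{i\lambda\tau})$, $\lambda\in\Lambda$, and let $\{\vec x_\lambda=(\xi_\lambda,x_\lambda)\}_{\lambda\in\Lambda}$ be the biorthogonal system. Then for every $\lambda\in\Lambda$, $$\overline{\xi_\lambda}=\frac{-i}{D'(\lambda)},$$ and for all $z\in\mathbb C$ (with the right-hand side understood by continuity at $z=\lambda$), $$\int_{-1}^0e^{izt}\overline{x_\lambda(t)}\,dt=\frac1{D'(\lambda)}\cdot\frac{e^{-iz}+\int_{-1}^0e^{iz\tau}\phi(\tau)\,d\tau+i\lambda}{z-\lambda}.$$
   Context: $\mathcal M=\mathbb C\times L^2(-1,0)$ with inner product $\langle(\xi,x),(\eta,y)\rangle=\xi\bar\eta+\int_{-1}^0x(t)\overline{y(t)}\,dt$. Standing assumptions: all zeros of $D$ lie in $\mathbb C_+=\{\operatorname{Im}z>0\}$ and are simple. The system $\{\vec e_\lambda\}$ is complete and minimal in $\mathcal M$, and $\{\vec x_\lambda\}$ is the unique system in $\mathcal M$ with $\langle\vec e_\mu,\vec x_\lambda\rangle=\delta_{\lambda,\mu}$ for $\lambda,\mu\in\Lambda$. *)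

theory Defs
  imports "HOL-Analysis.Analysis"
begin

text \<open>Elements of M = C x L2(-1,0) are pairs (xi, x) with x :: real => complex.\<close>

type_synonym Mvec = "complex \<times> (real \<Rightarrow> complex)"

definition L2m :: "(real \<Rightarrow> complex) \<Rightarrow> bool" where
  "L2m f \<longleftrightarrow> set_borel_measurable lborel {-1..0::real} f \<and>
     set_integrable lborel {-1..0::real} (\<lambda>t. (cmod (f t))^2)"

definition inM :: "Mvec \<Rightarrow> bool" where
  "inM u \<longleftrightarrow> L2m (snd u)"

definition Mip :: "Mvec \<Rightarrow> Mvec \<Rightarrow> complex" where
  "Mip u w = fst u * cnj (fst w) + (LINT t:{-1..0}|lborel. snd u t * cnj (snd w t))"

definition Mdist :: "Mvec \<Rightarrow> Mvec \<Rightarrow> real" where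
  "Mdist u w = sqrt ((cmod (fst u - fst w))^2 +
      (LINT t:{-1..0}|lborel. (cmod (snd u t - snd w t))^2))"

definition Mcomb :: "complex set \<Rightarrow> (complex \<Rightarrow> complex) \<Rightarrow> (complex \<Rightarrow> Mvec) \<Rightarrow> Mvec" where
  "Mcomb F c v = ((\<Sum>l\<in>F. c l * fst (v l)), (\<lambda>t. \<Sum>l\<in>F. c l * snd (v l) t))"

definition complete_sys :: "complex set \<Rightarrow> (complex \<Rightarrow> Mvec) \<Rightarrow> bool" where
  "complete_sys \<Lambda> v \<longleftrightarrow> (\<forall>u. inM u \<longrightarrow> (\<forall>\<epsilon>>0. \<exists>F c. finite F \<and> F \<subseteq> \<Lambda> \<and>
       Mdist u (Mcomb F c v) < \<epsilon>))"

definition minimal_sys :: "complex set \<Rightarrow> (complex \<Rightarrow> Mvec) \<Rightarrow> bool" where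
  "minimal_sys \<Lambda> v \<longleftrightarrow> (\<forall>\<mu>\<in>\<Lambda>. \<exists>\<epsilon>>0. \<forall>F c. finite F \<and> F \<subseteq> \<Lambda> - {\<mu>} \<longrightarrow>
       \<epsilon> \<le> Mdist (v \<mu>) (Mcomb F c v))"

definition Dfun :: "(real \<Rightarrow> complex) \<Rightarrow> complex \<Rightarrow> complex" where
  "Dfun \<phi> z = - \<i> * z + exp (- \<i> * z) +
      (LINT \<tau>:{-1..0}|lborel. exp (\<i> * of_real \<tau> * z) * \<phi> \<tau>)"

definition evec :: "complex \<Rightarrow> Mvec" where
  "evec l = (1, (\<lambda>\<tau>. exp (\<i> * l * of_real \<tau>)))"

end

theory Submission
  imports Defs
begin

text \<open>
  Write D(z) = -iz + E(z) with E(z) = exp(-iz) + int_{-1}^0 exp(iz tau) phi(tau) dtau. For a fixed zero l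
  of D, the divided difference (E(z) - E(l)) / (z - l) is itself a Fourier integral
  int_{-1}^0 exp(izs) y(s) ds of a bounded kernel y (by Fubini). Hence K(z) = int_{-1}^0 exp(izs) y(s) ds - i
  satisfies D(z) - D(l) = (z - l) K(z), so D'(l) = K(l), and K vanishes at every other zero of D.
  The vector u = (cnj (-i / D'(l)), cnj (y / D'(l))) therefore has inner product K(mu) / D'(l), which is
  1 for mu = l and 0 otherwise, with every e_mu; by completeness x_l = u, and both formulas follow.
\<close>

lemma borel_measurable_cnj [measurable]: "cnj \<in> borel_measurable borel"
  by (intro borel_measurable_continuous_onI continuous_intros)

lemma norm_exp_i_mult_le:
  fixes w :: complex and s :: real
  assumes "\<bar>s\<bar> \<le> 1"
  shows "cmod (exp (\<i> * w * of_real s)) \<le> exp (cmod w)"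
proof -
  have "Re (\<i> * w * of_real s) \<le> cmod (\<i> * w * of_real s)" by (rule complex_Re_le_cmod)
  also have "\<dots> = cmod w * \<bar>s\<bar>" by (simp add: norm_mult)
  also have "\<dots> \<le> cmod w" using assms by (simp add: mult_left_le)
  finally show ?thesis by (simp add: norm_exp_eq_Re)
qed

lemma set_integral_Re:
  fixes f :: "'a \<Rightarrow> complex"
  assumes "set_integrable M A f"
  shows "(LINT x:A|M. Re (f x)) = Re (LINT x:A|M. f x)"
proof -
  have "integrable M (\<lambda>x. indicator A x *\<^sub>R f x)"
    using assms by (simp add: set_integrable_def)
  from integral_Re[OF this] show ?thesis
    by (simp add: set_lebesgue_integral_def)
qed

lemma set_integral_sum:
  fixes f :: "'i \<Rightarrow> 'a \<Rightarrow> 'b::{banach, second_countable_topology}"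
  assumes "\<And>i. i \<in> I \<Longrightarrow> set_integrable M A (f i)"
  shows "(LINT x:A|M. \<Sum>i\<in>I. f i x) = (\<Sum>i\<in>I. LINT x:A|M. f i x)"
  using assms unfolding set_lebesgue_integral_def set_integrable_def
  by (simp add: scaleR_sum_right integral_sum)

lemma set_integrable_bounded_mult:
  fixes g f :: "'a \<Rightarrow> complex"
  assumes g: "g \<in> borel_measurable M" and B: "\<And>t. t \<in> A \<Longrightarrow> cmod (g t) \<le> B"
    and f: "set_integrable M A f"
  shows "set_integrable M A (\<lambda>t. g t * f t)"
proof (rule set_integrable_bound[where f = "\<lambda>t. of_real B * f t"])
  show "set_integrable M A (\<lambda>t. complex_of_real B * f t)"
    using f by simp
  have "(\<lambda>t. indicator A t *\<^sub>R f t) \<in> borel_measurable M"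
    using f unfolding set_integrable_def by auto
  then have "(\<lambda>t. g t * (indicator A t *\<^sub>R f t)) \<in> borel_measurable M"
    using g by measurable
  then show "set_borel_measurable M A (\<lambda>t. g t * f t)"
    unfolding set_borel_measurable_def by simp
  have "cmod (g t * f t) \<le> cmod (complex_of_real B * f t)" if "t \<in> A" for t
  proof -
    have "0 \<le> B" using B[OF that] norm_ge_zero order_trans by blast
    then show ?thesis
      using B[OF that] by (simp add: norm_mult mult_right_mono)
  qed
  then show "AE t in M. t \<in> A \<longrightarrow> cmod (g t * f t) \<le> cmod (complex_of_real B * f t)"
    by (intro AE_I2 impI)
qed

lemma (in pair_sigma_finite) integrable_product_bound:
  fixes F :: "'a \<Rightarrow> 'b \<Rightarrow> 'c::{banach, second_countable_topology}" and k :: "'a \<Rightarrow> real" and h :: "'b \<Rightarrow> real"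
  assumes F: "case_prod F \<in> borel_measurable (M1 \<Otimes>\<^sub>M M2)"
    and k: "integrable M1 k" and h: "integrable M2 h"
    and le: "\<And>x y. x \<in> space M1 \<Longrightarrow> y \<in> space M2 \<Longrightarrow> norm (F x y) \<le> k x * h y"
  shows "integrable (M1 \<Otimes>\<^sub>M M2) (case_prod F)"
proof (rule Bochner_Integration.integrable_bound[OF _ F])
  have [measurable]: "k \<in> borel_measurable M1" "h \<in> borel_measurable M2"
    using k h by (simp_all add: borel_measurable_integrable)
  show "integrable (M1 \<Otimes>\<^sub>M M2) (\<lambda>(x, y). k x * h y)"
  proof (rule Fubini_integrable)
    show "(\<lambda>(x, y). k x * h y) \<in> borel_measurable (M1 \<Otimes>\<^sub>M M2)"
      by measurable
    show "integrable M1 (\<lambda>x. LINT y|M2. norm (case_prod (\<lambda>x y. k x * h y) (x, y)))"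
      using k by (simp add: abs_mult integrable_abs integrable_mult_left)
    show "AE x in M1. integrable M2 (\<lambda>y. case_prod (\<lambda>x y. k x * h y) (x, y))"
      using h by (intro AE_I2) simp
  qed
  have "norm (F x y) \<le> norm (k x * h y)" if "x \<in> space M1" "y \<in> space M2" for x y
    using le[OF that] by (rule order_trans) simp
  then show "AE p in M1 \<Otimes>\<^sub>M M2. norm (case_prod F p) \<le> norm (case_prod (\<lambda>x y. k x * h y) p)"
    by (intro AE_I2) (auto simp: space_pair_measure)
qed

lemma tendsto_divided_difference:
  fixes f g :: "'a::real_normed_field \<Rightarrow> 'a"
  assumes eq: "\<And>z. f z = (z - a) * g z" and g: "isCont g a"
  shows "((\<lambda>z. f z / (z - a)) \<longlongrightarrow> g a) (at a)"
proof -
  have "\<forall>\<^sub>F z in at a. g z = f z / (z - a)"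
    unfolding eventually_at_filter by (intro always_eventually) (simp add: eq)
  with g show ?thesis
    unfolding isCont_def by (rule Lim_transform_eventually)
qed

section \<open>Square integrable functions on [-1, 0]\<close>

lemma L2m_imp_set_integrable:
  assumes "L2m f"
  shows "set_integrable lborel {-1..0::real} f"
proof (rule set_integrable_bound[where f = "\<lambda>t. 1 + (cmod (f t))^2"])
  have "set_integrable lborel {-1..0::real} (\<lambda>t. 1::real)"
    by (rule borel_integrable_atLeastAtMost') simp
  then show "set_integrable lborel {-1..0::real} (\<lambda>t. 1 + (cmod (f t))^2)"
    using assms by (auto simp: L2m_def)
  show "set_borel_measurable lborel {-1..0::real} f"
    using assms by (simp add: L2m_def)
  have "a \<le> 1 + a^2" for a :: real
  proof -
    have "2 * a \<le> 1 + a^2" using zero_le_power2[of "a - 1"] by (simp add: power2_diff)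
    then show ?thesis using zero_le_power2[of a] by linarith
  qed
  then show "AE t in lborel. t \<in> {-1..0} \<longrightarrow> norm (f t) \<le> norm (1 + (cmod (f t))^2)"
    by simp
qed

lemma L2m_mult_cnj_integrable:
  assumes f: "L2m f" and g: "L2m g"
  shows "set_integrable lborel {-1..0::real} (\<lambda>t. f t * cnj (g t))"
proof (rule set_integrable_bound[where f = "\<lambda>t. (cmod (f t))^2 + (cmod (g t))^2"])
  show "set_integrable lborel {-1..0::real} (\<lambda>t. (cmod (f t))^2 + (cmod (g t))^2)"
    using f g by (auto simp: L2m_def)
  have "(\<lambda>t. indicator {-1..0} t *\<^sub>R f t) \<in> borel_measurable lborel"
    and "(\<lambda>t. indicator {-1..0} t *\<^sub>R g t) \<in> borel_measurable lborel"
    using f g by (simp_all add: L2m_def set_borel_measurable_def)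
  then have "(\<lambda>t. (indicator {-1..0} t *\<^sub>R f t) * cnj (indicator {-1..0} t *\<^sub>R g t)) \<in> borel_measurable lborel"
    by measurable
  moreover have "(\<lambda>t. (indicator {-1..0} t *\<^sub>R f t) * cnj (indicator {-1..0} t *\<^sub>R g t))
      = (\<lambda>t. indicator {-1..0} t *\<^sub>R (f t * cnj (g t)))"
    by (auto simp: fun_eq_iff indicator_def)
  ultimately show "set_borel_measurable lborel {-1..0::real} (\<lambda>t. f t * cnj (g t))"
    by (simp add: set_borel_measurable_def)
  have prod_le: "a * b \<le> a^2 + b^2" if "0 \<le> a" "0 \<le> b" for a b :: real
  proof -
    have "2 * (a * b) \<le> a^2 + b^2" using zero_le_power2[of "a - b"] by (simp add: power2_diff)
    then show ?thesis using mult_nonneg_nonneg[OF that] by linarith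
  qed
  have norm_le: "norm (f t * cnj (g t)) \<le> norm ((cmod (f t))^2 + (cmod (g t))^2)" for t
    using prod_le[of "cmod (f t)" "cmod (g t)"] by (simp add: norm_mult)
  show "AE t in lborel. t \<in> {-1..0} \<longrightarrow>
      norm (f t * cnj (g t)) \<le> norm ((cmod (f t))^2 + (cmod (g t))^2)"
    by (intro AE_I2 impI norm_le)
qed

lemma L2m_bound:
  fixes f :: "real \<Rightarrow> complex" and h :: "real \<Rightarrow> real"
  assumes f: "set_borel_measurable lborel {-1..0} f" and h: "set_integrable lborel {-1..0} h"
    and le: "\<And>t. t \<in> {-1..0} \<Longrightarrow> (cmod (f t))^2 \<le> h t"
  shows "L2m f"
proof -
  have "(\<lambda>t. (cmod (indicator {-1..0} t *\<^sub>R f t))^2) \<in> borel_measurable lborel"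
    using f unfolding set_borel_measurable_def by measurable
  moreover have "(\<lambda>t. (cmod (indicator {-1..0} t *\<^sub>R f t))^2) = (\<lambda>t. indicator {-1..0} t *\<^sub>R (cmod (f t))^2)"
    by (auto simp: fun_eq_iff indicator_def)
  ultimately have "set_borel_measurable lborel {-1..0} (\<lambda>t. (cmod (f t))^2)"
    unfolding set_borel_measurable_def by simp
  then have "set_integrable lborel {-1..0} (\<lambda>t. (cmod (f t))^2)"
    by (rule set_integrable_bound[OF h]) (auto intro!: AE_I2 order_trans[OF le])
  then show ?thesis using f by (simp add: L2m_def)
qed

lemma L2m_bounded:
  assumes "set_borel_measurable lborel {-1..0} f" and "\<And>t. t \<in> {-1..0} \<Longrightarrow> cmod (f t) \<le> B"
  shows "L2m f"
proof (rule L2m_bound[OF assms(1) borel_integrable_atLeastAtMost'[of _ _ "\<lambda>t. B^2"]])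
  show "(cmod (f t))^2 \<le> B^2" if "t \<in> {-1..0}" for t
    using assms(2)[OF that] by (simp add: power_mono)
qed simp

lemma L2m_add:
  assumes f: "L2m f" and g: "L2m g"
  shows "L2m (\<lambda>t. f t + g t)"
proof (rule L2m_bound[where h = "\<lambda>t. 2 * (cmod (f t))^2 + 2 * (cmod (g t))^2"])
  show "set_borel_measurable lborel {-1..0} (\<lambda>t. f t + g t)"
    using f g unfolding L2m_def set_borel_measurable_def scaleR_add_right
    by (intro borel_measurable_add) auto
  show "set_integrable lborel {-1..0} (\<lambda>t. 2 * (cmod (f t))^2 + 2 * (cmod (g t))^2)"
    using f g by (auto simp: L2m_def)
  have "(cmod (a + b))^2 \<le> 2 * (cmod a)^2 + 2 * (cmod b)^2" for a b :: complex
  proof -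
    have "(cmod (a + b))^2 \<le> (cmod a + cmod b)^2"
      by (intro power_mono norm_triangle_ineq) simp
    then show ?thesis using zero_le_power2[of "cmod a - cmod b"] by (simp add: power2_sum power2_diff)
  qed
  then show "(cmod (f t + g t))^2 \<le> 2 * (cmod (f t))^2 + 2 * (cmod (g t))^2" for t .
qed

lemma L2m_mult:
  assumes "L2m f"
  shows "L2m (\<lambda>t. c * f t)"
proof (rule L2m_bound[where h = "\<lambda>t. (cmod c)^2 * (cmod (f t))^2"])
  have "(\<lambda>t. indicator {-1..0} t *\<^sub>R f t) \<in> borel_measurable lborel"
    using assms by (simp add: L2m_def set_borel_measurable_def)
  then have "(\<lambda>t. c * (indicator {-1..0} t *\<^sub>R f t)) \<in> borel_measurable lborel"
    by measurable
  then show "set_borel_measurable lborel {-1..0} (\<lambda>t. c * f t)"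
    by (simp add: set_borel_measurable_def)
  show "set_integrable lborel {-1..0} (\<lambda>t. (cmod c)^2 * (cmod (f t))^2)"
    using assms by (auto simp: L2m_def)
qed (simp add: norm_mult power_mult_distrib)

lemma L2m_cnj:
  assumes "L2m f"
  shows "L2m (\<lambda>t. cnj (f t))"
proof (rule L2m_bound[where h = "\<lambda>t. (cmod (f t))^2"])
  have "(\<lambda>t. indicator {-1..0} t *\<^sub>R f t) \<in> borel_measurable lborel"
    using assms by (simp add: L2m_def set_borel_measurable_def)
  then have "(\<lambda>t. cnj (indicator {-1..0} t *\<^sub>R f t)) \<in> borel_measurable lborel"
    by measurable
  then show "set_borel_measurable lborel {-1..0} (\<lambda>t. cnj (f t))"
    by (simp add: set_borel_measurable_def)
qed (use assms in \<open>simp_all add: L2m_def\<close>)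

lemma L2m_sum:
  assumes "finite F" and "\<And>l. l \<in> F \<Longrightarrow> L2m (f l)"
  shows "L2m (\<lambda>t. \<Sum>l\<in>F. c l * f l t)"
  using assms
proof (induction F rule: finite_induct)
  case empty
  show ?case by (rule L2m_bounded[of _ 0]) (simp_all add: set_borel_measurable_def)
next
  case (insert l F)
  then show ?case by (simp add: L2m_add L2m_mult)
qed

lemma L2m_diff:
  assumes "L2m f" and "L2m g"
  shows "L2m (\<lambda>t. f t - g t)"
  using L2m_add[OF assms(1) L2m_mult[OF assms(2), of "-1"]] by simp

section \<open>The Hilbert space M\<close>

lemma inM_Mcomb:
  assumes "finite F" and "\<And>l. l \<in> F \<Longrightarrow> inM (v l)"
  shows "inM (Mcomb F c v)"
  using assms L2m_sum[of F "\<lambda>l. snd (v l)" c] by (simp add: inM_def Mcomb_def)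

lemma Mip_Mcomb_left:
  assumes v: "\<And>l. l \<in> F \<Longrightarrow> inM (v l)" and w: "inM w"
  shows "Mip (Mcomb F c v) w = (\<Sum>l\<in>F. c l * Mip (v l) w)"
proof -
  have int: "set_integrable lborel {-1..0} (\<lambda>t. c l * (snd (v l) t * cnj (snd w t)))" if "l \<in> F" for l
    using v[OF that] w by (simp add: inM_def L2m_mult_cnj_integrable)
  have "(LINT t:{-1..0}|lborel. (\<Sum>l\<in>F. c l * snd (v l) t) * cnj (snd w t))
      = (LINT t:{-1..0}|lborel. \<Sum>l\<in>F. c l * (snd (v l) t * cnj (snd w t)))"
    by (simp add: sum_distrib_right mult.assoc)
  also have "\<dots> = (\<Sum>l\<in>F. c l * (LINT t:{-1..0}|lborel. snd (v l) t * cnj (snd w t)))"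
    by (simp add: set_integral_sum[OF int])
  finally show ?thesis
    by (simp add: Mip_def Mcomb_def distrib_left sum.distrib sum_distrib_left mult_ac)
qed

lemma Mip_diff_right:
  assumes v: "inM v" and a: "inM a" and b: "inM b"
  shows "Mip v (fst a - fst b, \<lambda>t. snd a t - snd b t) = Mip v a - Mip v b"
proof -
  have "set_integrable lborel {-1..0} (\<lambda>t. snd v t * cnj (snd a t))"
    and "set_integrable lborel {-1..0} (\<lambda>t. snd v t * cnj (snd b t))"
    using v a b by (simp_all add: inM_def L2m_mult_cnj_integrable)
  then have "(LINT t:{-1..0}|lborel. snd v t * cnj (snd a t - snd b t))
      = (LINT t:{-1..0}|lborel. snd v t * cnj (snd a t)) - (LINT t:{-1..0}|lborel. snd v t * cnj (snd b t))"
    by (simp add: right_diff_distrib)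
  then show ?thesis
    by (simp add: Mip_def algebra_simps)
qed

lemma Re_Mip_self:
  assumes "inM u"
  shows "Re (Mip u u) = (cmod (fst u))^2 + (LINT t:{-1..0}|lborel. (cmod (snd u t))^2)"
proof -
  have "Mip u u = of_real ((cmod (fst u))^2) + (LINT t:{-1..0}|lborel. of_real ((cmod (snd u t))^2))"
    unfolding Mip_def by (simp only: complex_norm_square)
  then show ?thesis
    by (simp only: set_integral_complex_of_real Re_complex_of_real plus_complex.sel)
qed

lemma Re_Mip_self_nonneg:
  assumes "inM u"
  shows "0 \<le> Re (Mip u u)"
proof -
  have "0 \<le> (LINT t:{-1..0}|lborel. (cmod (snd u t))^2)"
    by (simp add: set_lebesgue_integral_def)
  then show ?thesis
    unfolding Re_Mip_self[OF assms] by simp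
qed

lemma Mdist_sq:
  assumes u: "inM u" and v: "inM v"
  shows "(Mdist u v)^2 = Re (Mip u u) + Re (Mip v v) - 2 * Re (Mip v u)"
proof -
  obtain fu su fv sv where uv: "u = (fu, su)" "v = (fv, sv)" by (cases u, cases v)
  have su: "L2m su" and sv: "L2m sv" using u v uv by (simp_all add: inM_def)
  have cmod_diff_sq: "(cmod (a - b))^2 = Re (a * cnj a) + Re (b * cnj b) - 2 * Re (b * cnj a)" for a b :: complex
    unfolding cmod_power2 by (simp add: power2_eq_square algebra_simps)
  have uu: "set_integrable lborel {-1..0} (\<lambda>t. su t * cnj (su t))"
    and vv: "set_integrable lborel {-1..0} (\<lambda>t. sv t * cnj (sv t))"
    and vu: "set_integrable lborel {-1..0} (\<lambda>t. sv t * cnj (su t))"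
    using su sv by (simp_all add: L2m_mult_cnj_integrable)
  have "(LINT t:{-1..0}|lborel. (cmod (su t - sv t))^2)
      = (LINT t:{-1..0}|lborel. Re (su t * cnj (su t) + sv t * cnj (sv t) - 2 * (sv t * cnj (su t))))"
    by (rule set_lebesgue_integral_cong) (auto simp: cmod_diff_sq)
  also have "\<dots> = Re (LINT t:{-1..0}|lborel. su t * cnj (su t) + sv t * cnj (sv t) - 2 * (sv t * cnj (su t)))"
    using uu vv vu by (intro set_integral_Re) auto
  also have "\<dots> = Re ((LINT t:{-1..0}|lborel. su t * cnj (su t)) + (LINT t:{-1..0}|lborel. sv t * cnj (sv t))
          - 2 * (LINT t:{-1..0}|lborel. sv t * cnj (su t)))"
    using uu vv vu by (simp add: set_integral_add set_integral_diff)
  finally have I: "(LINT t:{-1..0}|lborel. (cmod (su t - sv t))^2) = \<dots>" .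
  have "0 \<le> (LINT t:{-1..0}|lborel. (cmod (su t - sv t))^2)"
    by (simp add: set_lebesgue_integral_def)
  then have D: "(Mdist u v)^2 = (cmod (fu - fv))^2 + (LINT t:{-1..0}|lborel. (cmod (su t - sv t))^2)"
    by (simp add: Mdist_def uv)
  show ?thesis
    unfolding D I by (simp add: Mip_def uv cmod_diff_sq)
qed

lemma Mdist_nonneg: "0 \<le> Mdist u w"
  unfolding Mdist_def set_lebesgue_integral_def
  by (intro real_sqrt_ge_zero add_nonneg_nonneg Bochner_Integration.integral_nonneg) auto

lemma Re_Mip_self_le_Mdist_Mcomb:
  assumes F: "finite F" and v: "\<And>l. l \<in> F \<Longrightarrow> inM (v l)" and w: "inM w"
    and orth: "\<And>l. l \<in> F \<Longrightarrow> Mip (v l) w = 0"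
  shows "Re (Mip w w) \<le> (Mdist w (Mcomb F c v))^2"
proof -
  have comb: "inM (Mcomb F c v)"
    using F v by (rule inM_Mcomb)
  have "Mip (Mcomb F c v) w = (\<Sum>l\<in>F. c l * Mip (v l) w)"
    using v w by (rule Mip_Mcomb_left)
  also have "\<dots> = 0"
    using orth by simp
  finally show ?thesis
    using Mdist_sq[OF w comb] Re_Mip_self_nonneg[OF comb] by simp
qed

lemma Re_Mip_self_eq_0D:
  assumes w: "inM w" and zero: "Re (Mip w w) = 0"
  shows "fst w = 0 \<and> (AE t in lborel. t \<in> {-1..0::real} \<longrightarrow> snd w t = 0)"
proof -
  have "0 \<le> (LINT t:{-1..0}|lborel. (cmod (snd w t))^2)"
    by (simp add: set_lebesgue_integral_def)
  then have "fst w = 0" and A: "(LINT t|lborel. indicator {-1..0} t *\<^sub>R (cmod (snd w t))^2) = 0"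
    using zero unfolding Re_Mip_self[OF w]
    by (simp_all add: add_nonneg_eq_0_iff set_lebesgue_integral_def)
  have int: "integrable lborel (\<lambda>t. indicator {-1..0} t *\<^sub>R (cmod (snd w t))^2)"
    using w by (simp add: inM_def L2m_def set_integrable_def)
  have "AE t in lborel. 0 \<le> indicator {-1..0} t *\<^sub>R (cmod (snd w t))^2"
    by (intro AE_I2) simp
  with A have "AE t in lborel. indicator {-1..0} t *\<^sub>R (cmod (snd w t))^2 = (0::real)"
    using integral_nonneg_eq_0_iff_AE[OF int] by blast
  then have "AE t in lborel. t \<in> {-1..0::real} \<longrightarrow> snd w t = 0"
    by (rule eventually_mono) (simp add: indicator_def)
  with \<open>fst w = 0\<close> show ?thesis by (intro conjI)
qed

lemma complete_sys_orthogonal_eq_0: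
  assumes compl: "complete_sys \<Lambda> v" and v: "\<forall>\<mu>\<in>\<Lambda>. inM (v \<mu>)"
    and w: "inM w" and orth: "\<forall>\<mu>\<in>\<Lambda>. Mip (v \<mu>) w = 0"
  shows "fst w = 0 \<and> (AE t in lborel. t \<in> {-1..0::real} \<longrightarrow> snd w t = 0)"
proof (rule Re_Mip_self_eq_0D[OF w])
  have "Re (Mip w w) \<le> 0"
  proof (rule ccontr)
    assume "\<not> Re (Mip w w) \<le> 0"
    then have "0 < sqrt (Re (Mip w w))" by simp
    then obtain F c where F: "finite F" "F \<subseteq> \<Lambda>"
      and close: "Mdist w (Mcomb F c v) < sqrt (Re (Mip w w))"
      using compl[unfolded complete_sys_def, rule_format, OF w] by blast
    have "Re (Mip w w) \<le> (Mdist w (Mcomb F c v))^2"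
      using F v w orth by (intro Re_Mip_self_le_Mdist_Mcomb) auto
    also have "\<dots> < (sqrt (Re (Mip w w)))^2"
      using close Mdist_nonneg by (rule power_strict_mono) simp
    finally show False
      using \<open>\<not> Re (Mip w w) \<le> 0\<close> by simp
  qed
  then show "Re (Mip w w) = 0"
    using Re_Mip_self_nonneg[OF w] by simp
qed

lemma complete_sys_unique:
  assumes compl: "complete_sys \<Lambda> v" and v: "\<forall>\<mu>\<in>\<Lambda>. inM (v \<mu>)"
    and a: "inM a" and b: "inM b" and eq: "\<forall>\<mu>\<in>\<Lambda>. Mip (v \<mu>) a = Mip (v \<mu>) b"
  shows "fst a = fst b \<and> (AE t in lborel. t \<in> {-1..0::real} \<longrightarrow> snd a t = snd b t)"
proof -
  have d: "inM (fst a - fst b, \<lambda>t. snd a t - snd b t)"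
    using a b by (simp add: inM_def L2m_diff)
  have "\<forall>\<mu>\<in>\<Lambda>. Mip (v \<mu>) (fst a - fst b, \<lambda>t. snd a t - snd b t) = 0"
    using v a b eq by (simp add: Mip_diff_right)
  from complete_sys_orthogonal_eq_0[OF compl v d this]
  have "fst a - fst b = 0 \<and> (AE t in lborel. t \<in> {-1..0::real} \<longrightarrow> snd a t - snd b t = 0)"
    unfolding fst_conv snd_conv .
  then show ?thesis
    by (auto elim: eventually_mono)
qed

section \<open>Fourier integrals over [-1, 0]\<close>

definition fourier_int :: "(real \<Rightarrow> complex) \<Rightarrow> complex \<Rightarrow> complex" where
  "fourier_int f z = (LINT t:{-1..0}|lborel. exp (\<i> * z * of_real t) * f t)"

lemma set_integrable_exp_mult:
  assumes "set_integrable lborel {-1..0} f"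
  shows "set_integrable lborel {-1..0} (\<lambda>t. exp (\<i> * z * of_real t) * f t)"
proof (rule set_integrable_bounded_mult[OF _ norm_exp_i_mult_le assms])
  have "continuous_on UNIV (\<lambda>t::real. exp (\<i> * z * complex_of_real t))"
    by (intro continuous_intros)
  then show "(\<lambda>t. exp (\<i> * z * complex_of_real t)) \<in> borel_measurable lborel"
    by (simp add: borel_measurable_continuous_onI)
qed auto

lemma integrable_indicator_exp_mult:
  assumes "set_integrable lborel {-1..0} \<phi>"
  shows "integrable lborel (\<lambda>\<tau>. indicator {-1..0} \<tau> *\<^sub>R (exp (\<i> * l * of_real \<tau>) * \<phi> \<tau>))"
  using set_integrable_exp_mult[OF assms] by (simp add: set_integrable_def)

lemma isCont_fourier_int:
  assumes f: "set_integrable lborel {-1..0} f"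
  shows "isCont (fourier_int f) z"
  unfolding continuous_at_sequentially comp_def
proof (intro allI impI)
  fix X :: "nat \<Rightarrow> complex"
  assume X: "X \<longlonglongrightarrow> z"
  then have "Bseq X"
    by (rule convergent_imp_Bseq[OF convergentI])
  then obtain M where M: "\<And>n. cmod (X n) \<le> M"
    unfolding Bseq_def by blast
  have fm: "(\<lambda>s. indicator {-1..0} s *\<^sub>R f s) \<in> borel_measurable lborel"
    and fi: "integrable lborel (\<lambda>s. indicator {-1..0} s *\<^sub>R f s)"
    using f by (auto simp: set_integrable_def)
  have meas: "(\<lambda>s. indicator {-1..0} s *\<^sub>R (exp (\<i> * x * of_real s) * f s)) \<in> borel_measurable lborel"
    for x
  proof -
    have "(\<lambda>s. exp (\<i> * x * of_real s) * (indicator {-1..0} s *\<^sub>R f s)) \<in> borel_measurable lborel"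
      using fm by measurable
    then show ?thesis by simp
  qed
  have dom: "norm (indicator {-1..0} s *\<^sub>R (exp (\<i> * X n * of_real s) * f s))
      \<le> exp M * norm (indicator {-1..0} s *\<^sub>R f s)" for n s
  proof (cases "s \<in> {-1..0}")
    case True
    then have "\<bar>s\<bar> \<le> 1" by auto
    then have "cmod (exp (\<i> * X n * of_real s)) \<le> exp (cmod (X n))"
      by (rule norm_exp_i_mult_le)
    also have "\<dots> \<le> exp M" using M[of n] by simp
    finally have "cmod (exp (\<i> * X n * of_real s)) \<le> exp M" .
    then show ?thesis using True by (simp add: norm_mult mult_right_mono)
  qed simp
  show "(\<lambda>n. fourier_int f (X n)) \<longlonglongrightarrow> fourier_int f z"
    unfolding fourier_int_def set_lebesgue_integral_def
  proof (rule integral_dominated_convergence[where w = "\<lambda>s. exp M * norm (indicator {-1..0} s *\<^sub>R f s)"])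
    show "integrable lborel (\<lambda>s. exp M * norm (indicator {-1..0} s *\<^sub>R f s))"
      using fi by (intro integrable_mult_right integrable_norm)
    show "AE s in lborel. (\<lambda>n. indicator {-1..0} s *\<^sub>R (exp (\<i> * X n * of_real s) * f s))
        \<longlonglongrightarrow> indicator {-1..0} s *\<^sub>R (exp (\<i> * z * of_real s) * f s)"
      by (intro AE_I2 tendsto_intros X)
    show "AE s in lborel. norm (indicator {-1..0} s *\<^sub>R (exp (\<i> * X n * of_real s) * f s))
        \<le> exp M * norm (indicator {-1..0} s *\<^sub>R f s)" for n
      by (intro AE_I2 dom)
  qed (fact meas)+
qed

lemma fourier_int_cong_AE:
  assumes f: "set_borel_measurable lborel {-1..0} f" and g: "set_borel_measurable lborel {-1..0} g"
    and eq: "AE t in lborel. t \<in> {-1..0} \<longrightarrow> f t = g t"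
  shows "fourier_int f z = fourier_int g z"
  unfolding fourier_int_def set_lebesgue_integral_def
proof (rule integral_cong_AE)
  have "(\<lambda>t. exp (\<i> * z * of_real t) * (indicator {-1..0} t *\<^sub>R f t)) \<in> borel_measurable lborel"
    and "(\<lambda>t. exp (\<i> * z * of_real t) * (indicator {-1..0} t *\<^sub>R g t)) \<in> borel_measurable lborel"
    using f g unfolding set_borel_measurable_def by measurable
  then show "(\<lambda>t. indicator {-1..0} t *\<^sub>R (exp (\<i> * z * of_real t) * f t)) \<in> borel_measurable lborel"
    and "(\<lambda>t. indicator {-1..0} t *\<^sub>R (exp (\<i> * z * of_real t) * g t)) \<in> borel_measurable lborel"
    by simp_all
  show "AE t in lborel. indicator {-1..0} t *\<^sub>R (exp (\<i> * z * of_real t) * f t)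
      = indicator {-1..0} t *\<^sub>R (exp (\<i> * z * of_real t) * g t)"
    using eq by (rule eventually_mono) (auto simp: indicator_def)
qed

lemma set_integral_exp_Icc:
  fixes w :: complex and a :: real
  assumes w: "w \<noteq> 0" and a: "a \<le> 0"
  shows "(LINT s:{a..0}|lborel. exp (\<i> * w * of_real s)) = (1 - exp (\<i> * w * of_real a)) / (\<i> * w)"
proof -
  have "(LBINT s=a..(0::real). exp (\<i> * w * of_real s))
      = exp (\<i> * w * of_real 0) / (\<i> * w) - exp (\<i> * w * of_real a) / (\<i> * w)"
  proof (rule interval_integral_FTC_finite[where F = "\<lambda>s. exp (\<i> * w * of_real s) / (\<i> * w)"])
    show "continuous_on {min a 0..max a 0} (\<lambda>s. exp (\<i> * w * complex_of_real s))"
      by (intro continuous_intros)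
    fix x :: real
    have "((\<lambda>z. exp (\<i> * w * z) / (\<i> * w)) has_field_derivative exp (\<i> * w * of_real x)) (at (of_real x))"
      using w by (auto intro!: derivative_eq_intros)
    from has_vector_derivative_real_field[OF this]
    show "((\<lambda>s. exp (\<i> * w * complex_of_real s) / (\<i> * w)) has_vector_derivative
        exp (\<i> * w * complex_of_real x)) (at x within {min a 0..max a 0})" .
  qed
  then show ?thesis
    using a by (simp add: interval_integral_Icc diff_divide_distrib)
qed

definition indef_integral :: "(real \<Rightarrow> complex) \<Rightarrow> real \<Rightarrow> complex" where
  "indef_integral g s = (LINT \<tau>|lborel. indicator {..s} \<tau> *\<^sub>R g \<tau>)"

lemma borel_measurable_indef_integral [measurable]:
  assumes [measurable]: "g \<in> borel_measurable borel"
  shows "indef_integral g \<in> borel_measurable borel"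
proof -
  have [measurable]: "Measurable.pred (borel \<Otimes>\<^sub>M borel) (\<lambda>x::real \<times> real. snd x \<in> {..fst x})"
    unfolding atMost_iff by measurable
  have "(\<lambda>(s, \<tau>). indicator {..s} \<tau> *\<^sub>R g \<tau>) \<in> borel_measurable (lborel \<Otimes>\<^sub>M lborel)"
    by measurable
  then show ?thesis
    unfolding indef_integral_def by measurable
qed

lemma norm_indef_integral_le:
  assumes g: "integrable lborel g"
  shows "cmod (indef_integral g s) \<le> (LINT \<tau>|lborel. norm (g \<tau>))"
proof -
  have "cmod (indef_integral g s) \<le> (LINT \<tau>|lborel. norm (indicator {..s} \<tau> *\<^sub>R g \<tau>))"
    unfolding indef_integral_def by (rule integral_norm_bound)
  also have "\<dots> \<le> (LINT \<tau>|lborel. norm (g \<tau>))"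
    using g by (intro integral_mono integrable_norm integrable_mult_indicator)
      (auto simp: indicator_def)
  finally show ?thesis .
qed

lemma set_integral_exp_mult_indef_integral:
  fixes g :: "real \<Rightarrow> complex"
  assumes g: "integrable lborel g" and g0: "\<And>\<tau>. \<tau> \<notin> {-1..0} \<Longrightarrow> g \<tau> = 0" and w: "w \<noteq> 0"
  shows "(LINT s:{-1..0}|lborel. exp (\<i> * w * of_real s) * indef_integral g s)
       = (LINT \<tau>|lborel. g \<tau> * (1 - exp (\<i> * w * of_real \<tau>))) / (\<i> * w)"
proof -
  have [measurable]: "g \<in> borel_measurable borel"
    using g by (simp add: borel_measurable_integrable)
  have [measurable]: "Measurable.pred (borel \<Otimes>\<^sub>M borel) (\<lambda>x::real \<times> real. fst x \<in> {..snd x})"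
    unfolding atMost_iff by measurable
  define F where "F \<tau> s = indicator {-1..0} s *\<^sub>R (exp (\<i> * w * of_real s) * (indicator {..s} \<tau> *\<^sub>R g \<tau>))"
    for \<tau> s :: real
  have Fm: "case_prod F \<in> borel_measurable (lborel \<Otimes>\<^sub>M lborel)"
    unfolding F_def by measurable
  have F_le: "cmod (F \<tau> s) \<le> norm (g \<tau>) * (indicator {-1..0} s * exp (cmod w))" for \<tau> s
  proof (cases "s \<in> {-1..0}")
    case True
    then have "cmod (exp (\<i> * w * of_real s)) \<le> exp (cmod w)"
      by (intro norm_exp_i_mult_le) auto
    then show ?thesis
      using True by (auto simp: F_def norm_mult indicator_def mult_ac intro: mult_left_mono)
  qed (simp add: F_def)
  have "integrable (lborel \<Otimes>\<^sub>M lborel) (case_prod F)"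
    using g by (intro lborel_pair.integrable_product_bound[OF Fm _ _ F_le]) auto
  then have "(LINT s|lborel. LINT \<tau>|lborel. F \<tau> s) = (LINT \<tau>|lborel. LINT s|lborel. F \<tau> s)"
    by (rule lborel_pair.Fubini_integral)
  moreover have "(LINT \<tau>|lborel. F \<tau> s) = indicator {-1..0} s *\<^sub>R (exp (\<i> * w * of_real s) * indef_integral g s)" for s
    unfolding F_def indef_integral_def by (simp only: integral_scaleR_right integral_mult_right_zero)
  moreover have "(LINT s|lborel. F \<tau> s) = g \<tau> * (1 - exp (\<i> * w * of_real \<tau>)) / (\<i> * w)" for \<tau>
  proof (cases "\<tau> \<in> {-1..0}")
    case True
    then have "(LINT s|lborel. F \<tau> s) = g \<tau> * (LINT s:{\<tau>..0}|lborel. exp (\<i> * w * of_real s))"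
      unfolding set_lebesgue_integral_def
      by (subst integral_mult_right_zero[symmetric], intro Bochner_Integration.integral_cong)
        (auto simp: F_def indicator_def)
    also have "\<dots> = g \<tau> * (1 - exp (\<i> * w * of_real \<tau>)) / (\<i> * w)"
      using True by (simp add: set_integral_exp_Icc[OF w])
    finally show ?thesis .
  qed (simp add: F_def g0)
  ultimately show ?thesis
    by (simp add: set_lebesgue_integral_def)
qed

section \<open>Divided differences of D\<close>

definition Efun :: "(real \<Rightarrow> complex) \<Rightarrow> complex \<Rightarrow> complex" where
  "Efun \<phi> z = exp (- \<i> * z) + fourier_int \<phi> z"

lemma Dfun_eq_Efun: "Dfun \<phi> z = - \<i> * z + Efun \<phi> z"
  unfolding Dfun_def Efun_def fourier_int_def by (simp add: mult_ac)

text \<open>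
  Since (exp(iz tau) - exp(il tau)) / (z - l) = -i exp(il tau) int_tau^0 exp(i(z - l)s) ds, exchanging
  the order of integration turns the divided difference of E into the Fourier integral of this kernel.
\<close>

definition divdiff_kernel :: "(real \<Rightarrow> complex) \<Rightarrow> complex \<Rightarrow> real \<Rightarrow> complex" where
  "divdiff_kernel \<phi> l s = - \<i> * exp (- \<i> * l * of_real s) *
     (exp (- \<i> * l) + indef_integral (\<lambda>\<tau>. indicator {-1..0} \<tau> *\<^sub>R (exp (\<i> * l * of_real \<tau>) * \<phi> \<tau>)) s)"

lemma L2m_divdiff_kernel:
  assumes \<phi>: "set_integrable lborel {-1..0} \<phi>"
  shows "L2m (divdiff_kernel \<phi> l)"
proof (rule L2m_bounded)
  define g where "g \<tau> = indicator {-1..0} \<tau> *\<^sub>R (exp (\<i> * l * of_real \<tau>) * \<phi> \<tau>)" for \<tau>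
  have g: "integrable lborel g"
    unfolding g_def by (rule integrable_indicator_exp_mult[OF \<phi>])
  then have [measurable]: "g \<in> borel_measurable borel"
    by (simp add: borel_measurable_integrable)
  have "divdiff_kernel \<phi> l \<in> borel_measurable borel"
    unfolding divdiff_kernel_def g_def[symmetric] by measurable
  then show "set_borel_measurable lborel {-1..0} (divdiff_kernel \<phi> l)"
    by (simp add: set_borel_measurable_def)
  show "cmod (divdiff_kernel \<phi> l s) \<le> exp (cmod l) * (exp (cmod l) + (LINT \<tau>|lborel. norm (g \<tau>)))"
    if s: "s \<in> {-1..0}" for s
  proof -
    have "cmod (exp (\<i> * (- l) * of_real s)) \<le> exp (cmod l)"
      using s norm_exp_i_mult_le[of s "- l"] by simp
    moreover have "cmod (exp (- \<i> * l)) \<le> exp (cmod l)"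
      using norm_exp_i_mult_le[of 1 "- l"] by simp
    then have "cmod (exp (- \<i> * l) + indef_integral g s) \<le> exp (cmod l) + (LINT \<tau>|lborel. norm (g \<tau>))"
      using norm_triangle_ineq[of "exp (- \<i> * l)" "indef_integral g s"] norm_indef_integral_le[OF g, of s]
      by linarith
    ultimately show ?thesis
      unfolding divdiff_kernel_def g_def[symmetric] norm_mult
      by (simp add: mult_mono)
  qed
qed

lemma set_integral_exp_mult_weighted_primitive:
  fixes \<phi> :: "real \<Rightarrow> complex" and l z :: complex
  assumes \<phi>: "set_integrable lborel {-1..0} \<phi>" and zl: "z \<noteq> l"
  defines "g \<equiv> \<lambda>\<tau>. indicator {-1..0} \<tau> *\<^sub>R (exp (\<i> * l * of_real \<tau>) * \<phi> \<tau>)"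
  shows "(LINT s:{-1..0}|lborel. exp (\<i> * (z - l) * of_real s) * indef_integral g s)
      = (fourier_int \<phi> l - fourier_int \<phi> z) / (\<i> * (z - l))"
proof -
  have g: "integrable lborel g"
    unfolding g_def by (rule integrable_indicator_exp_mult[OF \<phi>])
  have g0: "\<And>\<tau>. \<tau> \<notin> {-1..0} \<Longrightarrow> g \<tau> = 0"
    by (simp add: g_def)
  have shift: "g \<tau> * exp (\<i> * (z - l) * of_real \<tau>) = indicator {-1..0} \<tau> *\<^sub>R (exp (\<i> * z * of_real \<tau>) * \<phi> \<tau>)"
    for \<tau>
    by (simp add: g_def mult_ac flip: exp_add) (simp add: algebra_simps)
  have "(LINT s:{-1..0}|lborel. exp (\<i> * (z - l) * of_real s) * indef_integral g s)
      = (LINT \<tau>|lborel. g \<tau> * (1 - exp (\<i> * (z - l) * of_real \<tau>))) / (\<i> * (z - l))"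
    using g g0 zl by (intro set_integral_exp_mult_indef_integral) auto
  also have "(LINT \<tau>|lborel. g \<tau> * (1 - exp (\<i> * (z - l) * of_real \<tau>)))
      = (LINT \<tau>|lborel. g \<tau>) - (LINT \<tau>|lborel. g \<tau> * exp (\<i> * (z - l) * of_real \<tau>))"
  proof -
    have "integrable lborel (\<lambda>\<tau>. g \<tau> * exp (\<i> * (z - l) * of_real \<tau>))"
      unfolding shift by (rule integrable_indicator_exp_mult[OF \<phi>])
    then show ?thesis
      unfolding right_diff_distrib mult_1_right by (rule Bochner_Integration.integral_diff[OF g])
  qed
  also have "\<dots> = fourier_int \<phi> l - fourier_int \<phi> z"
    unfolding shift by (simp add: fourier_int_def set_lebesgue_integral_def g_def)
  finally show ?thesis .
qed

lemma fourier_int_divdiff_kernel: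
  fixes \<phi> :: "real \<Rightarrow> complex" and l z :: complex
  assumes \<phi>: "set_integrable lborel {-1..0} \<phi>"
  defines "g \<equiv> \<lambda>\<tau>. indicator {-1..0} \<tau> *\<^sub>R (exp (\<i> * l * of_real \<tau>) * \<phi> \<tau>)"
  shows "fourier_int (divdiff_kernel \<phi> l) z
      = - \<i> * exp (- \<i> * l) * (LINT s:{-1..0}|lborel. exp (\<i> * (z - l) * of_real s))
        + - \<i> * (LINT s:{-1..0}|lborel. exp (\<i> * (z - l) * of_real s) * indef_integral g s)"
proof -
  have g: "integrable lborel g"
    unfolding g_def by (rule integrable_indicator_exp_mult[OF \<phi>])
  then have [measurable]: "g \<in> borel_measurable borel"
    by (simp add: borel_measurable_integrable)
  have "set_integrable lborel {-1..0} (\<lambda>s. indef_integral g s * 1)"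
    by (rule set_integrable_bounded_mult[OF _ norm_indef_integral_le[OF g]])
      (auto intro: borel_integrable_atLeastAtMost')
  then have "set_integrable lborel {-1..0} (\<lambda>s. exp (\<i> * (z - l) * of_real s) * indef_integral g s)"
    by (intro set_integrable_exp_mult) simp
  moreover have "set_integrable lborel {-1..0} (\<lambda>s. exp (\<i> * (z - l) * of_real s))"
    by (intro borel_integrable_atLeastAtMost' continuous_intros)
  ultimately have "set_integrable lborel {-1..0} (\<lambda>s. - \<i> * exp (- \<i> * l) * exp (\<i> * (z - l) * of_real s))"
    and "set_integrable lborel {-1..0} (\<lambda>s. - \<i> * (exp (\<i> * (z - l) * of_real s) * indef_integral g s))"
    by (auto intro!: set_integrable_mult_right simp only:)
  moreover have "exp (\<i> * z * of_real s) * divdiff_kernel \<phi> l s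
      = - \<i> * exp (- \<i> * l) * exp (\<i> * (z - l) * of_real s)
        + - \<i> * (exp (\<i> * (z - l) * of_real s) * indef_integral g s)" for s
  proof -
    have "exp (\<i> * z * of_real s) * divdiff_kernel \<phi> l s
        = - \<i> * (exp (\<i> * z * of_real s) * exp (- \<i> * l * of_real s)) * (exp (- \<i> * l) + indef_integral g s)"
      unfolding divdiff_kernel_def g_def[symmetric] by (simp only: mult_ac)
    also have "exp (\<i> * z * of_real s) * exp (- \<i> * l * of_real s) = exp (\<i> * (z - l) * of_real s)"
      by (simp add: algebra_simps flip: exp_add)
    finally show ?thesis
      by (simp add: algebra_simps)
  qed
  ultimately show ?thesis
    unfolding fourier_int_def by (simp only: set_integral_add(2) set_integral_mult_right)
qed

lemma Efun_divided_difference: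
  assumes \<phi>: "set_integrable lborel {-1..0} \<phi>"
  shows "Efun \<phi> z - Efun \<phi> l = (z - l) * fourier_int (divdiff_kernel \<phi> l) z"
proof (cases "z = l")
  case False
  define w where "w = z - l"
  have w: "w \<noteq> 0" using False by (simp add: w_def)
  have "fourier_int (divdiff_kernel \<phi> l) z
      = - \<i> * exp (- \<i> * l) * ((1 - exp (\<i> * w * of_real (- 1))) / (\<i> * w))
        + - \<i> * ((fourier_int \<phi> l - fourier_int \<phi> z) / (\<i> * w))"
    unfolding w_def using False
    by (simp only: fourier_int_divdiff_kernel[OF \<phi>] set_integral_exp_Icc set_integral_exp_mult_weighted_primitive[OF \<phi>]
        right_minus_eq not_False_eq_True neg_le_0_iff_le zero_le_one)
  also have "\<dots> = - (exp (- \<i> * l) - exp (- \<i> * l) * exp (\<i> * w * of_real (- 1))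
        + (fourier_int \<phi> l - fourier_int \<phi> z)) / w"
    using w by (simp add: field_simps)
  also have "exp (- \<i> * l) * exp (\<i> * w * of_real (- 1)) = exp (- \<i> * z)"
    by (simp add: w_def algebra_simps flip: exp_add)
  also have "- (exp (- \<i> * l) - exp (- \<i> * z) + (fourier_int \<phi> l - fourier_int \<phi> z))
      = Efun \<phi> z - Efun \<phi> l"
    by (simp add: Efun_def algebra_simps)
  finally show ?thesis
    using w unfolding w_def[symmetric] by simp
qed simp

lemma Dfun_divided_difference:
  assumes "set_integrable lborel {-1..0} \<phi>"
  shows "Dfun \<phi> z - Dfun \<phi> l = (z - l) * (fourier_int (divdiff_kernel \<phi> l) z - \<i>)"
  using Efun_divided_difference[OF assms, of z l] by (simp add: Dfun_eq_Efun algebra_simps)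

lemma Dfun_has_field_derivative:
  assumes \<phi>: "set_integrable lborel {-1..0} \<phi>"
  shows "(Dfun \<phi> has_field_derivative (fourier_int (divdiff_kernel \<phi> l) l - \<i>)) (at l)"
proof -
  have "isCont (\<lambda>z. fourier_int (divdiff_kernel \<phi> l) z - \<i>) l"
    using L2m_imp_set_integrable[OF L2m_divdiff_kernel[OF \<phi>]] by (intro continuous_intros isCont_fourier_int)
  moreover have "Dfun \<phi> z - Dfun \<phi> l = (fourier_int (divdiff_kernel \<phi> l) z - \<i>) * (z - l)" for z
    using Dfun_divided_difference[OF \<phi>, of z l] by (simp only: mult.commute)
  ultimately show ?thesis
    unfolding CARAT_DERIV by (intro exI[where x = "\<lambda>z. fourier_int (divdiff_kernel \<phi> l) z - \<i>"]) blast
qed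

lemma fourier_int_divdiff_kernel_at_zero:
  assumes \<phi>: "set_integrable lborel {-1..0} \<phi>" and l: "Dfun \<phi> l = 0" and \<mu>: "Dfun \<phi> \<mu> = 0"
  shows "fourier_int (divdiff_kernel \<phi> l) \<mu> - \<i> = (if \<mu> = l then deriv (Dfun \<phi>) l else 0)"
proof (cases "\<mu> = l")
  case True
  then show ?thesis
    using DERIV_imp_deriv[OF Dfun_has_field_derivative[OF \<phi>]] by simp
next
  case False
  then show ?thesis
    using Dfun_divided_difference[OF \<phi>, of \<mu> l] l \<mu> by simp
qed

section \<open>The biorthogonal system\<close>

lemma inM_evec: "inM (evec \<mu>)"
proof -
  have "continuous_on UNIV (\<lambda>t::real. exp (\<i> * \<mu> * of_real t))"
    by (intro continuous_intros)
  then have "set_borel_measurable lborel {-1..0} (\<lambda>t. exp (\<i> * \<mu> * of_real t))"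
    unfolding set_borel_measurable_def by (intro borel_measurable_scaleR) (auto intro: borel_measurable_continuous_onI)
  then have "L2m (\<lambda>t. exp (\<i> * \<mu> * of_real t))"
  proof (rule L2m_bounded)
    show "cmod (exp (\<i> * \<mu> * of_real t)) \<le> exp (cmod \<mu>)" if "t \<in> {-1..0}" for t
      using that by (intro norm_exp_i_mult_le) auto
  qed
  then show ?thesis by (simp add: inM_def evec_def)
qed

lemma Mip_evec_cnj: "Mip (evec \<mu>) (cnj a, \<lambda>t. cnj (f t)) = a + fourier_int f \<mu>"
  by (simp add: Mip_def evec_def fourier_int_def)

lemma complete_sys_evec_dual_eq:
  assumes compl: "complete_sys \<Lambda> evec" and x: "inM x" and y: "L2m y" and c: "c \<noteq> 0"
    and dual: "\<forall>\<mu>\<in>\<Lambda>. Mip (evec \<mu>) x = (fourier_int y \<mu> - \<i>) / c"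
  shows "cnj (fst x) = - \<i> / c" and "fourier_int (\<lambda>t. cnj (snd x t)) z = fourier_int y z / c"
proof -
  define u where "u = (cnj (- \<i> / c), \<lambda>t. cnj (y t / c))"
  have yc: "L2m (\<lambda>t. y t / c)"
    using L2m_mult[OF y, of "1 / c"] by simp
  have u: "inM u"
    using L2m_cnj[OF yc] by (simp add: inM_def u_def)
  have "Mip (evec \<mu>) x = Mip (evec \<mu>) u" if "\<mu> \<in> \<Lambda>" for \<mu>
    using dual that unfolding u_def Mip_evec_cnj by (simp add: fourier_int_def diff_divide_distrib)
  then have "fst x = fst u \<and> (AE t in lborel. t \<in> {-1..0::real} \<longrightarrow> snd x t = snd u t)"
    using complete_sys_unique[OF compl _ x u] inM_evec by blast
  then have fst_x: "fst x = cnj (- \<i> / c)"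
    and AE_x: "AE t in lborel. t \<in> {-1..0::real} \<longrightarrow> cnj (snd x t) = y t / c"
    by (auto simp: u_def elim!: eventually_mono)
  show "cnj (fst x) = - \<i> / c"
    by (simp add: fst_x)
  have "fourier_int (\<lambda>t. cnj (snd x t)) z = fourier_int (\<lambda>t. y t / c) z"
    using L2m_cnj[of "snd x"] x yc AE_x by (intro fourier_int_cong_AE) (auto simp: inM_def L2m_def)
  then show "fourier_int (\<lambda>t. cnj (snd x t)) z = fourier_int y z / c"
    by (simp add: fourier_int_def)
qed

theorem proposition3:
  fixes \<phi> :: "real \<Rightarrow> complex" and \<Lambda> :: "complex set"
    and x :: "complex \<Rightarrow> complex \<times> (real \<Rightarrow> complex)"
  assumes phi: "L2m \<phi>"
    and Lam: "\<Lambda> = {z. Dfun \<phi> z = 0}"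
    and upper: "\<forall>l\<in>\<Lambda>. Im l > 0"
    and simple: "\<forall>l\<in>\<Lambda>. deriv (Dfun \<phi>) l \<noteq> 0"
    and compl: "complete_sys \<Lambda> evec"
    and minim: "minimal_sys \<Lambda> evec"
    and xM: "\<forall>l\<in>\<Lambda>. inM (x l)"
    and biorth: "\<forall>l\<in>\<Lambda>. \<forall>m\<in>\<Lambda>. Mip (evec m) (x l) = (if l = m then 1 else 0)"
    and lam: "l \<in> \<Lambda>"
  shows "cnj (fst (x l)) = - \<i> / deriv (Dfun \<phi>) l
     \<and> (\<forall>z. z \<noteq> l \<longrightarrow>
          (LINT t:{-1..0}|lborel. exp (\<i> * z * of_real t) * cnj (snd (x l) t))
          = 1 / deriv (Dfun \<phi>) l *
            ((exp (- \<i> * z) + (LINT \<tau>:{-1..0}|lborel. exp (\<i> * z * of_real \<tau>) * \<phi> \<tau>) - \<i> * l)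
             / (z - l)))
     \<and> ((\<lambda>z. 1 / deriv (Dfun \<phi>) l *
            ((exp (- \<i> * z) + (LINT \<tau>:{-1..0}|lborel. exp (\<i> * z * of_real \<tau>) * \<phi> \<tau>) - \<i> * l)
             / (z - l)))
        \<longlongrightarrow> (LINT t:{-1..0}|lborel. exp (\<i> * l * of_real t) * cnj (snd (x l) t))) (at l)"
proof -
  have \<phi>: "set_integrable lborel {-1..0} \<phi>"
    by (rule L2m_imp_set_integrable[OF phi])
  have zero: "Dfun \<phi> \<mu> = 0" if "\<mu> \<in> \<Lambda>" for \<mu>
    using that Lam by simp
  define y where "y = divdiff_kernel \<phi> l"
  define c where "c = deriv (Dfun \<phi>) l"
  have y: "L2m y"
    unfolding y_def by (rule L2m_divdiff_kernel[OF \<phi>])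
  have "c \<noteq> 0"
    using simple lam by (simp add: c_def)
  then have "\<forall>\<mu>\<in>\<Lambda>. Mip (evec \<mu>) (x l) = (fourier_int y \<mu> - \<i>) / c"
    using biorth lam zero by (simp add: y_def c_def fourier_int_divdiff_kernel_at_zero[OF \<phi>])
  note dual = complete_sys_evec_dual_eq[OF compl xM[rule_format, OF lam] y \<open>c \<noteq> 0\<close> this]
  define N where "N z = exp (- \<i> * z) + (LINT \<tau>:{-1..0}|lborel. exp (\<i> * z * of_real \<tau>) * \<phi> \<tau>) - \<i> * l"
    for z
  have N: "N z = (z - l) * fourier_int y z" for z
    using Dfun_divided_difference[OF \<phi>, of z l] zero[OF lam]
    by (simp add: y_def N_def Dfun_eq_Efun Efun_def fourier_int_def algebra_simps)
  then have pointwise: "fourier_int (\<lambda>t. cnj (snd (x l) t)) z = 1 / c * (N z / (z - l))"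
    if "z \<noteq> l" for z
    using that dual(2) by simp
  have "fourier_int (\<lambda>t. cnj (snd (x l) t)) l = 1 / c * fourier_int y l"
    using dual(2) by simp
  then have limit: "((\<lambda>z. 1 / c * (N z / (z - l))) \<longlongrightarrow> fourier_int (\<lambda>t. cnj (snd (x l) t)) l) (at l)"
    using y by (simp only:) (intro tendsto_mult_left tendsto_divided_difference[OF N] isCont_fourier_int
        L2m_imp_set_integrable)
  show ?thesis
    using dual(1) pointwise limit unfolding c_def[symmetric] N_def[symmetric]
    by (simp only: fourier_int_def) blast
qed

end
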